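(* Let $n\ge 2$, let $T=\{1,\dots,n\}$ and let $\mathcal T$ be a topology on $T$. Fix an integer $k\ge 1$. Let $A,R,B,S\subseteq T\setminus\{n\}$ with $A\cap R=\emptyset$, $B\cap S=\emptyset$, where every point of $A$ and of $B$ is old (at stage $k$), and every point of $R$ and of $S$ is new (at stage $k$). Suppose $A\cup R\cup\{n\}$ and $B\cup S\cup\{n\}$ are two distinct new lower $k$-systems of $\mathcal T$. Then $A\cup\{n\}$ and $B\cup\{n\}$ are open in $\mathcal T$.
   Context: For $\alpha\in T$, $\alpha^{*}$ (the covering set of $\alpha$) denotes the smallest open set of $\mathcal T$ containing $\alpha$. For an integer $m\ge 0$, an $m$-system is an open set $P$ of $\mathcal T$ such that $P\setminus\{n\}$ has exactly $m$ points; it is upper if $n\notin P$ and lower if $n\in P$. For fixed $k$, a point $\alpha\neq n$ is called old if $\alpha^{*}$ is an $m$-system for some $m<k$, and new if $\alpha^{*}$ is a $k$-system. A $k$-system is called new if it contains at least one point $p\neq n$ that is not contained in any $m$-system with $m\le k-1$. *)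

theory Defs
  imports "HOL-Analysis.Analysis"
begin

text \<open>Covering set of a: the smallest open set containing a (intersection of all open sets
  containing a; open since the space is finite).\<close>
definition covering :: "nat topology \<Rightarrow> nat \<Rightarrow> nat set" where
  "covering U a = \<Inter>{P. openin U P \<and> a \<in> P}"

definition msystem :: "nat topology \<Rightarrow> nat \<Rightarrow> nat \<Rightarrow> nat set \<Rightarrow> bool" where
  "msystem U n m P \<longleftrightarrow> openin U P \<and> card (P - {n}) = m"

definition upper_msystem :: "nat topology \<Rightarrow> nat \<Rightarrow> nat \<Rightarrow> nat set \<Rightarrow> bool" where
  "upper_msystem U n m P \<longleftrightarrow> msystem U n m P \<and> n \<notin> P"

definition lower_msystem :: "nat topology \<Rightarrow> nat \<Rightarrow> nat \<Rightarrow> nat set \<Rightarrow> bool" where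
  "lower_msystem U n m P \<longleftrightarrow> msystem U n m P \<and> n \<in> P"

definition old_point :: "nat topology \<Rightarrow> nat \<Rightarrow> nat \<Rightarrow> nat \<Rightarrow> bool" where
  "old_point U n k a \<longleftrightarrow> a \<in> topspace U \<and> a \<noteq> n \<and> (\<exists>m<k. msystem U n m (covering U a))"

definition new_point :: "nat topology \<Rightarrow> nat \<Rightarrow> nat \<Rightarrow> nat \<Rightarrow> bool" where
  "new_point U n k a \<longleftrightarrow> a \<in> topspace U \<and> a \<noteq> n \<and> msystem U n k (covering U a)"

definition new_ksystem :: "nat topology \<Rightarrow> nat \<Rightarrow> nat \<Rightarrow> nat set \<Rightarrow> bool" where
  "new_ksystem U n k P \<longleftrightarrow> msystem U n k P \<and>
     (\<exists>p\<in>P. p \<noteq> n \<and> \<not> (\<exists>m Q. m \<le> k - 1 \<and> msystem U n m Q \<and> p \<in> Q))"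

end

theory Submission
  imports Defs
begin

text \<open>In a finite space the covering set of a point is its smallest open neighbourhood, so it
  lies inside every open set containing the point and every point of it has a smaller covering
  set. A new point r of a k-system P therefore has covering set equal to P away from n, so two
  distinct lower k-systems share no new point; and no new point lies in the covering set of an
  old point, whose size away from n is smaller. Hence A \<union> {n} is the union of the open set
  P \<inter> Q with the covering sets of the points of A.\<close>

lemma in_covering: "a \<in> covering U a"
  unfolding covering_def by blast

lemma covering_subset: "openin U P \<Longrightarrow> a \<in> P \<Longrightarrow> covering U a \<subseteq> P"
  unfolding covering_def by blast

lemma openin_covering:
  assumes "finite (topspace U)" "a \<in> topspace U"
  shows "openin U (covering U a)"
proof -
  have "finite {P. openin U P \<and> a \<in> P}"
    by (rule finite_subset[of _ "Pow (topspace U)"]) (auto dest: openin_subset simp: assms(1))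
  moreover have "{P. openin U P \<and> a \<in> P} \<noteq> {}"
    using assms(2) by auto
  ultimately show ?thesis
    unfolding covering_def by (rule openin_Inter) auto
qed

lemma covering_subset_covering:
  assumes "finite (topspace U)" "a \<in> topspace U" "x \<in> covering U a"
  shows "covering U x \<subseteq> covering U a"
  using covering_subset[OF openin_covering[OF assms(1,2)] assms(3)] .

lemma card_covering_minus_le:
  assumes "finite (topspace U)" "a \<in> topspace U" "x \<in> covering U a"
  shows "card (covering U x - {n}) \<le> card (covering U a - {n})"
proof (rule card_mono)
  show "finite (covering U a - {n})"
    using openin_subset[OF openin_covering[OF assms(1,2)]] assms(1) finite_subset by blast
  show "covering U x - {n} \<subseteq> covering U a - {n}"
    using covering_subset_covering[OF assms] by blast
qed

lemma new_point_notin_covering_old_point: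
  assumes "finite (topspace U)" "old_point U n k a" "new_point U n k r"
  shows "r \<notin> covering U a"
proof
  assume r: "r \<in> covering U a"
  obtain m where "m < k" "card (covering U a - {n}) = m" "a \<in> topspace U"
    using assms(2) by (auto simp: old_point_def msystem_def)
  moreover have "card (covering U r - {n}) = k"
    using assms(3) by (simp add: new_point_def msystem_def)
  ultimately show False
    using card_covering_minus_le[OF assms(1) _ r, of n] by simp
qed

lemma msystem_minus_eq_covering_new_point:
  assumes "finite (topspace U)" "new_point U n k r" "msystem U n k P" "r \<in> P"
  shows "P - {n} = covering U r - {n}"
proof -
  have P: "openin U P" "card (P - {n}) = k"
    using assms(3) by (auto simp: msystem_def)
  have "finite (P - {n})"
    using openin_subset[OF P(1)] assms(1) finite_subset by blast
  moreover have "covering U r - {n} \<subseteq> P - {n}"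
    using covering_subset[OF P(1) assms(4)] by blast
  moreover have "card (covering U r - {n}) = k"
    using assms(2) by (simp add: new_point_def msystem_def)
  ultimately show ?thesis
    using P(2) card_subset_eq by metis
qed

lemma lower_msystems_eq_if_new_point:
  assumes "finite (topspace U)" "new_point U n k r"
    and "lower_msystem U n k P" "lower_msystem U n k Q" "r \<in> P" "r \<in> Q"
  shows "P = Q"
proof -
  have "P - {n} = Q - {n}"
    using assms msystem_minus_eq_covering_new_point[OF assms(1,2)]
    by (simp add: lower_msystem_def)
  moreover have "n \<in> P" "n \<in> Q"
    using assms(3,4) by (simp_all add: lower_msystem_def)
  ultimately show ?thesis by blast
qed

lemma openin_old_points_insert:
  assumes fin: "finite (topspace U)"
    and old: "\<forall>a\<in>A. old_point U n k a" and new: "\<forall>r\<in>R. new_point U n k r"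
    and P: "openin U (A \<union> R \<union> {n})"
    and Q: "openin U Q" "n \<in> Q" "Q \<subseteq> A \<union> {n}"
  shows "openin U (A \<union> {n})"
proof -
  have "covering U a \<subseteq> A \<union> {n}" if a: "a \<in> A" for a
  proof -
    have "covering U a \<subseteq> A \<union> R \<union> {n}"
      using covering_subset[OF P] a by blast
    moreover have "covering U a \<inter> R = {}"
      using new_point_notin_covering_old_point[OF fin] old new a by blast
    ultimately show ?thesis by blast
  qed
  then have "A \<union> {n} = Q \<union> (\<Union>a\<in>A. covering U a)"
    using Q(2,3) in_covering by fast
  moreover have "openin U (\<Union>a\<in>A. covering U a)"
    using openin_covering[OF fin] old by (auto simp: old_point_def)
  ultimately show ?thesis
    using Q(1) by (metis openin_Un)
qed

theorem lemma2:
  fixes U :: "nat topology" and n k :: nat and A R B S :: "nat set"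
  assumes "n \<ge> 2"
    and "topspace U = {1..n}"
    and "k \<ge> 1"
    and "A \<subseteq> {1..n} - {n}" "R \<subseteq> {1..n} - {n}"
    and "B \<subseteq> {1..n} - {n}" "S \<subseteq> {1..n} - {n}"
    and "A \<inter> R = {}" "B \<inter> S = {}"
    and "\<forall>a\<in>A. old_point U n k a" "\<forall>b\<in>B. old_point U n k b"
    and "\<forall>r\<in>R. new_point U n k r" "\<forall>s\<in>S. new_point U n k s"
    and "A \<union> R \<union> {n} \<noteq> B \<union> S \<union> {n}"
    and "new_ksystem U n k (A \<union> R \<union> {n})" "lower_msystem U n k (A \<union> R \<union> {n})"
    and "new_ksystem U n k (B \<union> S \<union> {n})" "lower_msystem U n k (B \<union> S \<union> {n})"
  shows "openin U (A \<union> {n}) \<and> openin U (B \<union> {n})"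
proof -
  let ?P = "A \<union> R \<union> {n}" and ?Q = "B \<union> S \<union> {n}"
  have fin: "finite (topspace U)"
    using assms(2) by simp
  have open_P: "openin U ?P" and open_Q: "openin U ?Q"
    using assms(16,18) by (simp_all add: lower_msystem_def msystem_def)
  have "R \<inter> ?Q = {}" "S \<inter> ?P = {}"
    using lower_msystems_eq_if_new_point[OF fin] assms(12-14,16,18) by blast+
  then have "?P \<inter> ?Q \<subseteq> A \<union> {n}" "?P \<inter> ?Q \<subseteq> B \<union> {n}"
    by blast+
  moreover have "openin U (?P \<inter> ?Q)" "n \<in> ?P \<inter> ?Q"
    using openin_Int[OF open_P open_Q] by auto
  ultimately show ?thesis
    using openin_old_points_insert[OF fin assms(10,12) open_P]
      openin_old_points_insert[OF fin assms(11,13) open_Q] by (simp add: Int_commute)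
qed

end
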